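(* Let $m,n\ge1$ be natural numbers. For $j=1,2$ let $\mathcal U_j$ be a non-principal ultrafilter on $\mathbb N$ and $(a^{(j)}_i,b^{(j)}_i)_{i\in\mathbb N}$ coprime natural numbers with $2\le a^{(j)}_i<b^{(j)}_i$ such that $S^{(j)}=\prod_{\mathcal U_j}\{xa^{(j)}_i+yb^{(j)}_i\}$ is a limit 2-semigroup with generators $a^{(j)},b^{(j)}$ in which $m\,b^{(j)}=\beta_n$, and such that the residue $\mathrm{res}_m(a^{(j)})$ of $a^{(j)}$ modulo $m$ is coprime to $m$. Suppose that $S^{(1)}$ and $S^{(2)}$ have the same residues of $a$ modulo every $N\ge1$, the same value of $q_0=r(a,b)$, and, in case $q_0=0$, the same $M_a$-residues of $\alpha(b)$ modulo every $N\ge1$. Then $S^{(1)}$ and $S^{(2)}$ have the same invariants, namely: the same residues of $b$ modulo every $N$; the same $M_b$-residues of $\beta_1$, the same $M_a$-residues of $\alpha_1$ and of $\alpha(b)$ modulo every $N$; and for all $p,q\in\mathbb N$ the same truth values of the statements $p\,a<q\,b$, of $p\,b<q\,\alpha(b)+q\,a$, and of $p\,\beta_1<q\,ab$. Furthermore, in any such limit 2-semigroup, $q_0=0$ or $q_0=m/k$ for some positive integer $k$.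
   Context: A standard 2-semigroup with coprime generators $2\le a<b$ is $\{xa+yb:x,y\in\mathbb N\}$ with $+,<,0$. A limit 2-semigroup is an ultraproduct $\prod_{\mathcal U}S_i$ of standard 2-semigroups $S_i$ (generators $a_i<b_i$) over a non-principal ultrafilter, not isomorphic to a standard semigroup, with generators $a=[(a_i)]$, $b=[(b_i)]$; it is assumed that $a$ exceeds every finite multiple of the minimal positive distance between elements. All the following notions are defined in each $S_i$ and interpreted coordinatewise in the ultraproduct. $ab$ is the product; $\alpha(b)=\lfloor b/a\rfloor a$; for $1\le n<b$, $\beta_n$ is the least multiple of $b$ that is $\equiv n\pmod a$ (i.e. $kb$ with $0\le k<a$, $kb\equiv n$), and $\alpha_n=\beta_n-n$; $p\,x$ denotes $x$ added to itself $p$ times. The residue of $x$ modulo $N$ is the $r<N$ with $x\equiv r\pmod N$ (in the ultraproduct: holding for $\mathcal U$-almost all coordinates). For a multiple $x=ta\le ab$ of $a$, its $M_a$-residue modulo $N$ is $t \bmod N$; for a multiple $x=tb\le ab$ of $b$, its $M_b$-residue modulo $N$ is $t\bmod N$. The ratio $q_0=r(a,b)=\sup\{p/q: p,q\in\mathbb Z_{\ge0}, q\neq0,\ p\,b\le q\,a\}$. *)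

theory Defs
  imports Complex_Main
begin

definition ultrafilter :: "nat filter \<Rightarrow> bool" where
  "ultrafilter U \<longleftrightarrow> U \<noteq> bot \<and> (\<forall>P. eventually P U \<or> eventually (\<lambda>i. \<not> P i) U)"

definition nonprincipal :: "nat filter \<Rightarrow> bool" where
  "nonprincipal U \<longleftrightarrow> (\<forall>n. \<not> eventually (\<lambda>i. i = n) U)"

definition sg :: "nat \<Rightarrow> nat \<Rightarrow> nat set" where
  "sg a b = {x * a + y * b | x y. True}"

definition min_dist :: "nat \<Rightarrow> nat \<Rightarrow> nat" where
  "min_dist a b = (LEAST d. 0 < d \<and> (\<exists>x\<in>sg a b. x + d \<in> sg a b))"

definition alpha_b :: "nat \<Rightarrow> nat \<Rightarrow> nat" where
  "alpha_b a b = (b div a) * a"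

definition beta :: "nat \<Rightarrow> nat \<Rightarrow> nat \<Rightarrow> nat" where
  "beta a b n = (LEAST k. (k * b) mod a = n mod a) * b"

definition alpha :: "nat \<Rightarrow> nat \<Rightarrow> nat \<Rightarrow> nat" where
  "alpha a b n = beta a b n - n"

(* Limit 2-semigroup: ultraproduct over U of the standard semigroups with
   generators a i < b i, with a exceeding every finite multiple of the
   minimal positive distance *)
definition limit2 :: "nat filter \<Rightarrow> (nat \<Rightarrow> nat) \<Rightarrow> (nat \<Rightarrow> nat) \<Rightarrow> bool" where
  "limit2 U a b \<longleftrightarrow> ultrafilter U \<and> nonprincipal U \<and>
     (\<forall>i. coprime (a i) (b i) \<and> 2 \<le> a i \<and> a i < b i) \<and>
     (\<forall>k::nat. eventually (\<lambda>i. k * min_dist (a i) (b i) < a i) U)"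

(* residue modulo N of the ultraproduct element [(x i)] *)
definition ures :: "nat filter \<Rightarrow> (nat \<Rightarrow> nat) \<Rightarrow> nat \<Rightarrow> nat" where
  "ures U x N = (THE r. r < N \<and> eventually (\<lambda>i. x i mod N = r) U)"

(* M_a-residue of a multiple x = t a, and M_b-residue of a multiple x = t b *)
definition Ma_res :: "nat filter \<Rightarrow> (nat \<Rightarrow> nat) \<Rightarrow> (nat \<Rightarrow> nat) \<Rightarrow> nat \<Rightarrow> nat" where
  "Ma_res U a x N = ures U (\<lambda>i. x i div a i) N"

definition Mb_res :: "nat filter \<Rightarrow> (nat \<Rightarrow> nat) \<Rightarrow> (nat \<Rightarrow> nat) \<Rightarrow> nat \<Rightarrow> nat" where
  "Mb_res U b x N = ures U (\<lambda>i. x i div b i) N"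

definition ratio :: "nat filter \<Rightarrow> (nat \<Rightarrow> nat) \<Rightarrow> (nat \<Rightarrow> nat) \<Rightarrow> real" where
  "ratio U a b = Sup {real p / real q | p q. q \<noteq> 0 \<and> eventually (\<lambda>i. p * b i \<le> q * a i) U}"

end

(* Since a is eventually larger than any fixed number and m b = beta_n, we can write
   m b = t a + n and, with beta_1 = k1 b, n k1 = m + c a, where c < n.  All invariants are
   then expressions in a, t and c: b, k1 and alpha_1 / a arise from polynomials in a, t, c
   by exact division by m, n and m n, alpha(b) / a = t div m, and each comparison reduces
   eventually to an inequality in t alone or in c alone.  The ratio r(a,b) is m / j if t is
   eventually the constant j and 0 if t tends to infinity, so equal ratios force the same
   behaviour of t.  In the unbounded case t = m (t div m) + t mod m, where the residues of
   t div m are those of alpha(b) / a, and t mod m and c are the unique solutions of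
   t a + n = 0 (mod m) and c a + m = 0 (mod n), a being a unit modulo m and n.  Hence a, t
   and c have the same residues in both ultraproducts, and so do all the invariants. *)

theory Submission
  imports Defs "HOL-Number_Theory.Cong"
begin

section \<open>Ultrafilter limits\<close>

lemma ultrafilter_bounded_eventually_const:
  fixes f :: "nat \<Rightarrow> nat"
  assumes U: "ultrafilter U" and bounded: "eventually (\<lambda>i. f i < N) U"
  shows "\<exists>r<N. eventually (\<lambda>i. f i = r) U"
  using bounded
proof (induction N)
  case 0
  then show ?case using U by (simp add: ultrafilter_def)
next
  case (Suc N)
  from U consider "eventually (\<lambda>i. f i = N) U" | "eventually (\<lambda>i. f i \<noteq> N) U"
    unfolding ultrafilter_def by blast
  then show ?case
  proof cases
    case 2
    with Suc.prems have "eventually (\<lambda>i. f i < N) U"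
      by eventually_elim auto
    with Suc.IH show ?thesis by (meson less_SucI)
  qed auto
qed

lemma ultrafilter_eventually_const_or_at_top:
  fixes f :: "nat \<Rightarrow> nat"
  assumes U: "ultrafilter U"
  shows "(\<exists>r. eventually (\<lambda>i. f i = r) U) \<or> filterlim f at_top U"
proof (rule disjCI)
  assume "\<not> filterlim f at_top U"
  then obtain Z where "\<not> eventually (\<lambda>i. Z \<le> f i) U"
    unfolding filterlim_at_top by blast
  with U have "eventually (\<lambda>i. \<not> Z \<le> f i) U"
    unfolding ultrafilter_def by blast
  then have "eventually (\<lambda>i. f i < Z) U"
    by (rule eventually_mono) simp
  then show "\<exists>r. eventually (\<lambda>i. f i = r) U"
    using ultrafilter_bounded_eventually_const[OF U] by blast
qed

lemma eventually_comp_const_iff: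
  assumes "F \<noteq> bot" "eventually (\<lambda>i. f i = r) F"
  shows "eventually (\<lambda>i. P (f i)) F \<longleftrightarrow> P r"
proof -
  have "eventually (\<lambda>i. P (f i) = P r) F"
    using assms(2) by eventually_elim simp
  then show ?thesis using assms(1) by (simp add: eventually_subst)
qed

lemma eventually_comp_at_top_iff:
  assumes "F \<noteq> bot" "filterlim f at_top F" "eventually (\<lambda>x. P x = B) at_top"
  shows "eventually (\<lambda>i. P (f i)) F \<longleftrightarrow> B"
proof -
  have "eventually (\<lambda>i. P (f i) = B) F"
    using eventually_compose_filterlim[OF assms(3,2)] .
  then show ?thesis using assms(1) by (simp add: eventually_subst)
qed

lemma ures_eqI:
  assumes "U \<noteq> bot" "r < N" "eventually (\<lambda>i. x i mod N = r) U"
  shows "ures U x N = r"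
  unfolding ures_def
proof (rule the_equality)
  fix r' assume "r' < N \<and> eventually (\<lambda>i. x i mod N = r') U"
  then have "eventually (\<lambda>i. r' = r) U"
    using assms(3) by (auto elim: eventually_elim2)
  then show "r' = r" using assms(1) by simp
qed (use assms in auto)

lemma eventually_mod_ures:
  assumes U: "ultrafilter U" and "0 < N"
  shows "eventually (\<lambda>i. x i mod N = ures U x N) U"
proof -
  obtain r where r: "r < N" "eventually (\<lambda>i. x i mod N = r) U"
    using ultrafilter_bounded_eventually_const[OF U, of "\<lambda>i. x i mod N" N] \<open>0 < N\<close> by auto
  moreover have "U \<noteq> bot" using U by (simp add: ultrafilter_def)
  ultimately have "ures U x N = r" by (intro ures_eqI)
  then show ?thesis using r(2) by simp
qed

section \<open>Residues of ultraproducts\<close>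

text \<open>The two ultraproducts have the same image in the profinite completion of \<open>\<nat>\<close>.\<close>

definition same_residues :: "nat filter \<Rightarrow> (nat \<Rightarrow> nat) \<Rightarrow> nat filter \<Rightarrow> (nat \<Rightarrow> nat) \<Rightarrow> bool" where
  "same_residues U1 x U2 y \<longleftrightarrow>
     (\<forall>N>0. \<exists>r. eventually (\<lambda>i. x i mod N = r) U1 \<and> eventually (\<lambda>i. y i mod N = r) U2)"

lemma same_residues_iff_ures:
  assumes U1: "ultrafilter U1" and U2: "ultrafilter U2"
  shows "same_residues U1 x U2 y \<longleftrightarrow> (\<forall>N\<ge>1. ures U1 x N = ures U2 y N)"
proof
  assume same: "same_residues U1 x U2 y"
  show "\<forall>N\<ge>1. ures U1 x N = ures U2 y N"
  proof (intro allI impI)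
    fix N :: nat assume "1 \<le> N"
    then have "0 < N" by simp
    then obtain r where r: "eventually (\<lambda>i. x i mod N = r) U1" "eventually (\<lambda>i. y i mod N = r) U2"
      using same unfolding same_residues_def by auto
    have nontriv: "U1 \<noteq> bot" "U2 \<noteq> bot" using U1 U2 by (simp_all add: ultrafilter_def)
    then obtain i where "x i mod N = r" using r(1) eventually_happens by blast
    then have "r < N" using \<open>1 \<le> N\<close> by auto
    then show "ures U1 x N = ures U2 y N"
      using ures_eqI[OF nontriv(1) _ r(1)] ures_eqI[OF nontriv(2) _ r(2)] by simp
  qed
next
  assume same: "\<forall>N\<ge>1. ures U1 x N = ures U2 y N"
  show "same_residues U1 x U2 y"
    unfolding same_residues_def
  proof (intro allI impI)
    fix N :: nat assume "0 < N"
    then have "ures U1 x N = ures U2 y N" using same by simp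
    then show "\<exists>r. eventually (\<lambda>i. x i mod N = r) U1 \<and> eventually (\<lambda>i. y i mod N = r) U2"
      using eventually_mod_ures[OF U1 \<open>0 < N\<close>, of x] eventually_mod_ures[OF U2 \<open>0 < N\<close>, of y]
      by auto
  qed
qed

lemma same_residues_const:
  assumes "eventually (\<lambda>i. x i = r) U1" "eventually (\<lambda>i. y i = r) U2"
  shows "same_residues U1 x U2 y"
  unfolding same_residues_def
proof (intro allI impI exI conjI)
  fix N :: nat
  show "eventually (\<lambda>i. x i mod N = r mod N) U1" using assms(1) by eventually_elim simp
  show "eventually (\<lambda>i. y i mod N = r mod N) U2" using assms(2) by eventually_elim simp
qed

lemma same_residues_constant: "same_residues U1 (\<lambda>_. r) U2 (\<lambda>_. r)"
  by (rule same_residues_const[where r = r]) simp_all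

lemma same_residues_binop:
  assumes f_mod: "\<And>u v N. f u v mod N = f (u mod N) (v mod N) mod N"
    and same: "same_residues U1 x U2 y" and same': "same_residues U1 x' U2 y'"
  shows "same_residues U1 (\<lambda>i. f (x i) (x' i)) U2 (\<lambda>i. f (y i) (y' i))"
  unfolding same_residues_def
proof (intro allI impI)
  fix N :: nat assume "0 < N"
  from same \<open>0 < N\<close> obtain r where r:
    "eventually (\<lambda>i. x i mod N = r) U1" "eventually (\<lambda>i. y i mod N = r) U2"
    unfolding same_residues_def by blast
  from same' \<open>0 < N\<close> obtain r' where r':
    "eventually (\<lambda>i. x' i mod N = r') U1" "eventually (\<lambda>i. y' i mod N = r') U2"
    unfolding same_residues_def by blast
  have "eventually (\<lambda>i. f (z i) (z' i) mod N = f r r' mod N) F"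
    if "eventually (\<lambda>i. z i mod N = r) F" "eventually (\<lambda>i. z' i mod N = r') F"
    for F and z z' :: "nat \<Rightarrow> nat"
    using that
  proof eventually_elim
    case (elim i)
    have "f (z i) (z' i) mod N = f (z i mod N) (z' i mod N) mod N" by (rule f_mod)
    then show ?case using elim by simp
  qed
  then show "\<exists>s. eventually (\<lambda>i. f (x i) (x' i) mod N = s) U1 \<and>
      eventually (\<lambda>i. f (y i) (y' i) mod N = s) U2"
    using r r' by blast
qed

lemmas same_residues_add = same_residues_binop[where f = "(+)", OF mod_add_eq[symmetric]]
lemmas same_residues_mult = same_residues_binop[where f = "(*)", OF mod_mult_eq[symmetric]]

lemma same_residues_div_exact:
  assumes same: "same_residues U1 x U2 y" and "0 < d"
    and "eventually (\<lambda>i. d * x' i = x i) U1" "eventually (\<lambda>i. d * y' i = y i) U2"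
  shows "same_residues U1 x' U2 y'"
  unfolding same_residues_def
proof (intro allI impI)
  fix N :: nat assume "0 < N"
  with \<open>0 < d\<close> have "0 < d * N" by simp
  with same obtain r where r:
    "eventually (\<lambda>i. x i mod (d * N) = r) U1" "eventually (\<lambda>i. y i mod (d * N) = r) U2"
    unfolding same_residues_def by blast
  have "eventually (\<lambda>i. z' i mod N = r div d) F"
    if "eventually (\<lambda>i. d * z' i = z i) F" "eventually (\<lambda>i. z i mod (d * N) = r) F"
    for F and z z' :: "nat \<Rightarrow> nat"
    using that
  proof eventually_elim
    case (elim i)
    then have "r = d * (z' i mod N)" by (simp flip: mod_mult_mult1)
    then show ?case using \<open>0 < d\<close> by simp
  qed
  then show "\<exists>s. eventually (\<lambda>i. x' i mod N = s) U1 \<and> eventually (\<lambda>i. y' i mod N = s) U2"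
    using assms(3,4) r by blast
qed

lemma same_residues_cong:
  assumes "same_residues U1 x U2 y"
    and "eventually (\<lambda>i. x' i = x i) U1" "eventually (\<lambda>i. y' i = y i) U2"
  shows "same_residues U1 x' U2 y'"
  using same_residues_div_exact[of U1 x U2 y 1] assms by simp

lemma same_residues_div:
  assumes same: "same_residues U1 x U2 y" and "0 < d"
  shows "same_residues U1 (\<lambda>i. x i div d) U2 (\<lambda>i. y i div d)"
  unfolding same_residues_def
proof (intro allI impI)
  fix N :: nat assume "0 < N"
  with \<open>0 < d\<close> have "0 < d * N" by simp
  with same obtain r where
    "eventually (\<lambda>i. x i mod (d * N) = r) U1" "eventually (\<lambda>i. y i mod (d * N) = r) U2"
    unfolding same_residues_def by blast
  then have "eventually (\<lambda>i. x i div d mod N = r div d) U1"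
    "eventually (\<lambda>i. y i div d mod N = r div d) U2"
    using \<open>0 < d\<close> by (auto elim!: eventually_mono simp: mod_mult2_eq)
  then show "\<exists>s. eventually (\<lambda>i. x i div d mod N = s) U1 \<and> eventually (\<lambda>i. y i div d mod N = s) U2"
    by blast
qed

lemma same_residues_unique_solution:
  assumes U1: "ultrafilter U1" and U2: "ultrafilter U2"
    and same: "same_residues U1 a1 U2 a2"
    and coprime: "eventually (\<lambda>i. coprime (a1 i) M) U1"
    and sol1: "eventually (\<lambda>i. x1 i < M \<and> [x1 i * a1 i + e = 0] (mod M)) U1"
    and sol2: "eventually (\<lambda>i. x2 i < M \<and> [x2 i * a2 i + e = 0] (mod M)) U2"
  shows "\<exists>r. eventually (\<lambda>i. x1 i = r) U1 \<and> eventually (\<lambda>i. x2 i = r) U2"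
proof -
  have nontriv: "U1 \<noteq> bot" "U2 \<noteq> bot" using U1 U2 by (simp_all add: ultrafilter_def)
  have "eventually (\<lambda>i. x1 i < M) U1" using sol1 by (rule eventually_mono) simp
  then obtain r1 where r1: "r1 < M" "eventually (\<lambda>i. x1 i = r1) U1"
    using ultrafilter_bounded_eventually_const[OF U1] by blast
  have "eventually (\<lambda>i. x2 i < M) U2" using sol2 by (rule eventually_mono) simp
  then obtain r2 where r2: "r2 < M" "eventually (\<lambda>i. x2 i = r2) U2"
    using ultrafilter_bounded_eventually_const[OF U2] by blast
  from r1(1) have "0 < M" by simp
  then obtain ra where ra: "eventually (\<lambda>i. a1 i mod M = ra) U1" "eventually (\<lambda>i. a2 i mod M = ra) U2"
    using same unfolding same_residues_def by blast
  have "eventually (\<lambda>i. coprime ra M \<and> [r1 * ra + e = 0] (mod M)) U1"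
    using coprime sol1 r1(2) ra(1)
    by eventually_elim
      (unfold cong_def, metis \<open>0 < M\<close> coprime_mod_left_iff less_not_refl mod_add_left_eq mod_mult_right_eq)
  then have cop: "coprime ra M" and eq1: "[r1 * ra + e = 0] (mod M)"
    using nontriv(1) by simp_all
  have "eventually (\<lambda>i. [r2 * ra + e = 0] (mod M)) U2"
    using sol2 r2(2) ra(2)
    by eventually_elim (unfold cong_def, metis mod_add_left_eq mod_mult_right_eq)
  then have eq2: "[r2 * ra + e = 0] (mod M)" using nontriv(2) by simp
  from eq1 eq2 have "[r1 * ra = r2 * ra] (mod M)"
    by (metis cong_add_rcancel_nat cong_sym cong_trans)
  then have "[r1 = r2] (mod M)" using cong_mult_rcancel_nat cop by blast
  then have "r1 = r2" using cong_less_modulus_unique_nat r1(1) r2(1) by blast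
  then show ?thesis using r1(2) r2(2) by blast
qed

lemma Sup_fractions_less:
  fixes m k :: nat
  assumes "0 < k" "0 < m"
  shows "Sup {real p / real q | p q. q \<noteq> 0 \<and> p * k < q * m} = real m / real k"
proof (rule cSup_eq)
  fix x assume "x \<in> {real p / real q | p q. q \<noteq> 0 \<and> p * k < q * m}"
  then obtain p q where x: "x = real p / real q" "q \<noteq> 0" "p * k < q * m" by blast
  then have "real p * real k < real q * real m" by (metis of_nat_less_iff of_nat_mult)
  then show "x \<le> real m / real k" unfolding x(1) using x(2) assms(1) by (simp add: field_simps)
next
  fix y assume ub: "\<And>x. x \<in> {real p / real q | p q. q \<noteq> 0 \<and> p * k < q * m} \<Longrightarrow> x \<le> y"
  show "real m / real k \<le> y"
  proof (rule ccontr)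
    assume "\<not> real m / real k \<le> y"
    then obtain j :: nat where j: "0 < j" "1 / real j < real m / real k - y"
      using reals_Archimedean[of "real m / real k - y"] by (metis diff_gt_0_iff_gt inverse_eq_divide not_le of_nat_Suc zero_less_Suc)
    have mj: "1 \<le> m * j" using assms(2) j(1) by simp
    \<comment> \<open>the fractions \<open>(m j - 1) / (k j)\<close> approach \<open>m / k\<close> from below\<close>
    have "(m * j - 1) * k < (k * j) * m"
      using assms(1) mj by (simp add: diff_mult_distrib algebra_simps)
    moreover have "k * j \<noteq> 0" using assms(1) j(1) by simp
    ultimately have "real (m * j - 1) / real (k * j) \<le> y" by (intro ub) blast
    moreover have "real (m * j - 1) / real (k * j) = real m / real k - 1 / (real k * real j)"
      using mj assms(1) j(1) by (simp add: of_nat_diff field_simps)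
    moreover have "1 / (real k * real j) \<le> 1 / real j"
      using assms(1) j(1) by (intro divide_left_mono) auto
    ultimately show False using j(2) by linarith
  qed
qed

lemma mult_add_less_mult_iff:
  fixes u v a e :: nat
  assumes "e < a"
  shows "u * a + e < v * a \<longleftrightarrow> u < v"
proof
  assume "u * a + e < v * a"
  then have "u * a < v * a" by linarith
  then show "u < v" by simp
next
  assume "u < v"
  then have "(u + 1) * a \<le> v * a" by (intro mult_right_mono) auto
  then show "u * a + e < v * a" using assms by simp
qed

lemma mult_add_le_mult_iff:
  fixes u v a e :: nat
  assumes "0 < e" "e < a"
  shows "u * a + e \<le> v * a \<longleftrightarrow> u < v"
proof
  assume "u * a + e \<le> v * a"
  then have "u * a < v * a" using assms(1) by linarith
  then show "u < v" by simp
next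
  assume "u < v"
  then show "u * a + e \<le> v * a" using mult_add_less_mult_iff[OF assms(2)] by (simp add: less_imp_le)
qed

context
  fixes m b t a n :: nat
  assumes mb_eq: "m * b = t * a + n" and m_pos: "0 < m"
begin

lemma scaled_mult_eq: "m * (p * b) = p * t * a + p * n"
proof -
  have "m * (p * b) = p * (m * b)" by (simp add: ac_simps)
  also have "\<dots> = p * t * a + p * n" unfolding mb_eq by (simp add: algebra_simps)
  finally show ?thesis .
qed

lemma div_eq_of_mult_eq:
  assumes "n < a"
  shows "b div a = t div m"
proof -
  have "b div a = (m * b) div (a * m)" using m_pos by (simp add: ac_simps)
  also have "\<dots> = (t * a + n) div a div m" by (simp add: mb_eq div_mult2_eq)
  also have "(t * a + n) div a = t" using assms by simp
  finally show ?thesis .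
qed

lemma mult_b_le_mult_a_iff:
  assumes "0 < n" "p * n < a" "q \<noteq> 0"
  shows "p * b \<le> q * a \<longleftrightarrow> p * t < q * m"
proof -
  have "p * b \<le> q * a \<longleftrightarrow> m * (p * b) \<le> m * (q * a)" using m_pos by simp
  also have "\<dots> \<longleftrightarrow> p * t * a + p * n \<le> q * m * a"
    unfolding scaled_mult_eq by (simp add: ac_simps)
  also have "\<dots> \<longleftrightarrow> p * t < q * m"
    using assms m_pos by (cases "p = 0") (simp_all add: mult_add_le_mult_iff)
  finally show ?thesis .
qed

lemma mult_a_less_mult_b_iff:
  assumes "0 < n" "q * n < a"
  shows "p * a < q * b \<longleftrightarrow> m * p \<le> q * t \<and> 0 < q"
proof -
  have "p * a < q * b \<longleftrightarrow> m * (p * a) < m * (q * b)" using m_pos by simp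
  also have "\<dots> \<longleftrightarrow> m * p * a < q * t * a + q * n"
    unfolding scaled_mult_eq by (simp add: ac_simps)
  also have "\<dots> \<longleftrightarrow> m * p \<le> q * t \<and> 0 < q"
  proof (cases "q = 0")
    case False
    then have "q * t * a + q * n \<le> m * p * a \<longleftrightarrow> q * t < m * p"
      using assms by (intro mult_add_le_mult_iff) auto
    with False show ?thesis by (auto simp: not_le)
  qed simp
  finally show ?thesis .
qed

lemma mult_b_less_alpha_b_iff:
  assumes "n < a" "p * n < a"
  shows "p * b < q * (b div a * a) + q * a \<longleftrightarrow> p * t < m * q * (t div m + 1)"
proof -
  have "p * b < q * (b div a * a) + q * a \<longleftrightarrow> m * (p * b) < m * (q * (b div a * a) + q * a)"
    using m_pos by simp
  also have "\<dots> \<longleftrightarrow> p * t * a + p * n < m * q * (t div m + 1) * a"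
    unfolding scaled_mult_eq div_eq_of_mult_eq[OF assms(1)] by (simp add: algebra_simps)
  also have "\<dots> \<longleftrightarrow> p * t < m * q * (t div m + 1)"
    using assms(2) by (rule mult_add_less_mult_iff)
  finally show ?thesis .
qed

end

lemma mult_less_mult_div_add_one_iff:
  fixes m q x p :: nat
  assumes "0 < m" "q * m < x"
  shows "p * x < m * q * (x div m + 1) \<longleftrightarrow> p \<le> q \<and> 0 < q"
proof -
  define u where "u = m * (x div m + 1)"
  have "m * (x div m) + x mod m = x" "x mod m < m" using assms(1) by simp_all
  then have u: "x < u" "u \<le> x + m" unfolding u_def distrib_left mult_1_right by linarith+
  have "p * x < q * u \<longleftrightarrow> p \<le> q \<and> 0 < q"
  proof (cases "p \<le> q \<and> 0 < q")
    case True
    then have "p * x \<le> q * x" by simp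
    also have "q * x < q * u" using True u(1) by simp
    finally show ?thesis using True by simp
  next
    case False
    have "q * u \<le> p * x"
    proof (cases "q = 0")
      case False
      with \<open>\<not> (p \<le> q \<and> 0 < q)\<close> have "q + 1 \<le> p" by simp
      then have "(q + 1) * x \<le> p * x" by (rule mult_right_mono) simp
      moreover have "q * u \<le> q * (x + m)" using u(2) by simp
      moreover have "q * m \<le> x" using assms(2) by simp
      ultimately show ?thesis by (simp add: algebra_simps)
    qed simp
    then show ?thesis using False by simp
  qed
  moreover have "m * q * (x div m + 1) = q * u" unfolding u_def by (simp only: ac_simps)
  ultimately show ?thesis by simp
qed

lemma mult_beta_less_mult_ab_iff:
  fixes n k m c a b p q :: nat
  assumes "n * k = m + c * a" "0 < n" "0 < b" "p * m < a"
  shows "p * (k * b) < q * (a * b) \<longleftrightarrow> p * c < n * q"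
proof -
  have "p * (k * b) < q * (a * b) \<longleftrightarrow> n * (p * k) < n * (q * a)" using assms(2,3) by simp
  also have "n * (p * k) = p * c * a + p * m"
    unfolding mult.left_commute[of n] assms(1) by (simp add: algebra_simps)
  also have "n * (q * a) = n * q * a" by simp
  also have "p * c * a + p * m < n * q * a \<longleftrightarrow> p * c < n * q"
    using assms(4) by (rule mult_add_less_mult_iff)
  finally show ?thesis .
qed

section \<open>Limit 2-semigroups with \<open>m b = \<beta>\<^sub>n\<close>\<close>

lemma min_dist_pos:
  assumes "0 < a"
  shows "0 < min_dist a b"
proof -
  have "0 * a + 0 * b \<in> sg a b" "1 * a + 0 * b \<in> sg a b" unfolding sg_def by blast+
  then have "0 \<in> sg a b" "0 + a \<in> sg a b" by simp_all
  then have "\<exists>d. 0 < d \<and> (\<exists>x\<in>sg a b. x + d \<in> sg a b)" using assms by blast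
  then show ?thesis unfolding min_dist_def by (rule LeastI2_ex) auto
qed

lemma beta_eq_mult:
  assumes "coprime a b" "0 < a"
  obtains k where "k < a" "beta a b r = k * b" "[k * b = r] (mod a)"
proof -
  obtain x where x: "[b * x = 1] (mod a)"
    using cong_solve_coprime_nat assms(1) by (metis One_nat_def coprime_commute)
  have "[(x * r) mod a * b = x * r * b] (mod a)" by (simp add: cong_def mod_mult_left_eq)
  also have "[x * r * b = r] (mod a)"
    using cong_mult[OF x cong_refl[of r]] by (simp add: ac_simps)
  finally have "[(x * r) mod a * b = r] (mod a)" .
  then have sol: "(((x * r) mod a) * b) mod a = r mod a" by (simp add: cong_def)
  define k where "k = (LEAST k. (k * b) mod a = r mod a)"
  have "k \<le> (x * r) mod a" unfolding k_def using sol by (rule Least_le)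
  then have "k < a" using assms(2) by (meson le_less_trans mod_less_divisor)
  moreover have "[k * b = r] (mod a)" unfolding k_def cong_def using sol by (rule LeastI)
  moreover have "beta a b r = k * b" unfolding beta_def k_def ..
  ultimately show ?thesis using that by blast
qed

locale limit2_beta =
  fixes m n :: nat and U :: "nat filter" and a b :: "nat \<Rightarrow> nat"
  assumes m_pos: "0 < m" and n_pos: "0 < n"
    and limit2: "limit2 U a b"
    and mb_eq_beta: "eventually (\<lambda>i. m * b i = beta (a i) (b i) n) U"
    and coprime_ures_a: "coprime (ures U a m) m"
begin

lemma ultrafilter: "ultrafilter U"
  using limit2 by (simp add: limit2_def)

lemma nontrivial: "U \<noteq> bot"
  using ultrafilter by (simp add: ultrafilter_def)

lemma generators: "2 \<le> a i" "a i < b i" "coprime (a i) (b i)"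
  using limit2 by (auto simp: limit2_def)

lemma b_pos: "0 < b i"
  using generators(2)[of i] by linarith

lemma a_large: "eventually (\<lambda>i. x < a i) U"
proof -
  have "eventually (\<lambda>i. x * min_dist (a i) (b i) < a i) U"
    using limit2 by (simp add: limit2_def)
  then show ?thesis
  proof (rule eventually_mono)
    fix i assume "x * min_dist (a i) (b i) < a i"
    moreover have "x \<le> x * min_dist (a i) (b i)"
      using min_dist_pos[of "a i" "b i"] generators(1)[of i] by simp
    ultimately show "x < a i" by linarith
  qed
qed

definition t :: "nat \<Rightarrow> nat" where "t i = m * b i div a i"
definition k1 :: "nat \<Rightarrow> nat" where "k1 i = beta (a i) (b i) 1 div b i"
definition c :: "nat \<Rightarrow> nat" where "c i = n * k1 i div a i"

lemma mb_eq: "eventually (\<lambda>i. m * b i = t i * a i + n) U"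
  using mb_eq_beta a_large[of n]
proof eventually_elim
  case (elim i)
  obtain k where k: "beta (a i) (b i) n = k * b i" "[k * b i = n] (mod a i)"
    using beta_eq_mult[of "a i" "b i"] generators[of i] by auto
  have "m = k" using elim k(1) b_pos[of i] by simp
  then have "m * b i mod a i = n" using elim k(2) by (simp add: cong_def)
  then show "m * b i = t i * a i + n" unfolding t_def by (metis div_mult_mod_eq)
qed

lemma k1: "k1 i < a i" "k1 i * b i mod a i = 1" "beta (a i) (b i) 1 = k1 i * b i"
proof -
  obtain k where k: "k < a i" "beta (a i) (b i) 1 = k * b i" "[k * b i = 1] (mod a i)"
    using beta_eq_mult[of "a i" "b i"] generators[of i] by auto
  moreover have "k1 i = k" unfolding k1_def k(2) using generators(2)[of i] by simp
  ultimately show "k1 i < a i" "k1 i * b i mod a i = 1" "beta (a i) (b i) 1 = k1 i * b i"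
    using generators(1)[of i] by (auto simp: cong_def)
qed

lemma c_less: "c i < n"
  using k1(1)[of i] n_pos unfolding c_def by (simp add: less_mult_imp_div_less mult.commute)

lemma nk1_eq: "eventually (\<lambda>i. n * k1 i = m + c i * a i) U"
  using mb_eq a_large[of m]
proof eventually_elim
  case (elim i)
  have "[k1 i * b i = 1] (mod a i)" using k1(2)[of i] generators(1)[of i] by (simp add: cong_def)
  then have "[n * k1 i * b i = n * 1] (mod a i)" unfolding mult.assoc by (rule cong_scalar_left)
  also have "[n * 1 = m * b i] (mod a i)" using elim by (simp add: cong_def)
  finally have "[n * k1 i = m] (mod a i)"
    using cong_mult_rcancel_nat generators(3)[of i] by (metis coprime_commute)
  then have "n * k1 i mod a i = m" using elim by (simp add: cong_def)
  then show "n * k1 i = m + c i * a i" unfolding c_def by (metis add.commute div_mult_mod_eq)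
qed

lemma coprime_a_m: "eventually (\<lambda>i. coprime (a i) m) U"
  using eventually_mod_ures[OF ultrafilter m_pos, of a]
  by eventually_elim (metis coprime_ures_a coprime_mod_left_iff m_pos not_gr_zero)

lemma coprime_a_n: "eventually (\<lambda>i. coprime (a i) n) U"
  using mb_eq coprime_a_m
proof eventually_elim
  case (elim i)
  then have "coprime (a i) (t i * a i + n)"
    using generators(3)[of i] by (metis coprime_mult_right_iff)
  then show "coprime (a i) n" by (simp add: coprime_iff_gcd_eq_1 gcd_add_mult)
qed

lemma t_mod_solves: "eventually (\<lambda>i. t i mod m < m \<and> [t i mod m * a i + n = 0] (mod m)) U"
  using mb_eq
proof eventually_elim
  case (elim i)
  have "[t i mod m * a i + n = t i * a i + n] (mod m)"
    by (intro cong_add cong_mult cong_refl) (simp add: cong_def)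
  also have "[t i * a i + n = 0] (mod m)" using elim by (metis cong_mult_self_left)
  finally show ?case using m_pos by simp
qed

lemma c_solves: "eventually (\<lambda>i. c i < n \<and> [c i * a i + m = 0] (mod n)) U"
  using nk1_eq
proof eventually_elim
  case (elim i)
  then have "[c i * a i + m = 0] (mod n)" by (metis add.commute cong_mult_self_left)
  then show ?case using c_less by simp
qed

lemma alpha1_eq:
  "eventually (\<lambda>i. m * n * (alpha (a i) (b i) 1 div a i) = m * t i + c i * n + c i * t i * a i) U"
  using mb_eq nk1_eq
proof eventually_elim
  case (elim i)
  define w where "w = k1 i * b i div a i"
  have k1b: "k1 i * b i = a i * w + 1"
    unfolding w_def using k1(2)[of i] by (metis div_mult_mod_eq mult.commute)
  have "alpha (a i) (b i) 1 div a i = w"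
    unfolding alpha_def k1(3) k1b using generators(1)[of i] by simp
  moreover have "a i * (m * n * w) + m * n = a i * (m * t i + c i * n + c i * t i * a i) + m * n"
  proof -
    have "a i * (m * n * w) + m * n = m * n * (k1 i * b i)" unfolding k1b by (simp add: algebra_simps)
    also have "\<dots> = (n * k1 i) * (m * b i)" by (simp add: ac_simps)
    also have "\<dots> = (m + c i * a i) * (t i * a i + n)" using elim by simp
    finally show ?thesis by (simp add: algebra_simps)
  qed
  ultimately show ?case using generators(1)[of i] by simp
qed

lemma div_m_t_eq: "eventually (\<lambda>i. t i div m = alpha_b (a i) (b i) div a i) U"
  using mb_eq a_large[of n]
  by eventually_elim (simp add: alpha_b_def div_eq_of_mult_eq m_pos generators(1))

lemma eventually_mult_b_le_mult_a_iff:
  assumes "q \<noteq> 0"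
  shows "eventually (\<lambda>i. p * b i \<le> q * a i) U \<longleftrightarrow> eventually (\<lambda>i. p * t i < q * m) U"
  using mb_eq a_large[of "p * n"]
  by (intro eventually_subst, eventually_elim) (simp add: assms m_pos n_pos mult_b_le_mult_a_iff)

lemma ratio_eq_Sup_t:
  "ratio U a b = Sup {real p / real q | p q. q \<noteq> 0 \<and> eventually (\<lambda>i. p * t i < q * m) U}"
  unfolding ratio_def by (rule arg_cong[where f = Sup]) (use eventually_mult_b_le_mult_a_iff in blast)

lemma t_const_pos:
  assumes j: "eventually (\<lambda>i. t i = j) U"
  shows "0 < j"
proof (rule ccontr)
  assume "\<not> 0 < j"
  have "eventually (\<lambda>i. False) U"
    using j mb_eq a_large[of n]
  proof eventually_elim
    case (elim i)
    then have "m * b i < a i" using \<open>\<not> 0 < j\<close> by simp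
    moreover have "a i < b i" "b i \<le> m * b i" using generators(2) m_pos by simp_all
    ultimately show False by linarith
  qed
  then show False using nontrivial by simp
qed

lemma ratio_if_t_const:
  assumes j: "eventually (\<lambda>i. t i = j) U"
  shows "ratio U a b = real m / real j"
proof -
  have "eventually (\<lambda>i. p * t i < q * m) U \<longleftrightarrow> p * j < q * m" for p q
    by (rule eventually_comp_const_iff[OF nontrivial j])
  then show ?thesis
    unfolding ratio_eq_Sup_t using Sup_fractions_less[OF t_const_pos[OF j] m_pos] by simp
qed

lemma ratio_if_t_at_top:
  assumes at_top: "filterlim t at_top U"
  shows "ratio U a b = 0"
proof -
  have ev_iff: "eventually (\<lambda>i. p * t i < q * m) U \<longleftrightarrow> p = 0" if "q \<noteq> 0" for p q
  proof (rule eventually_comp_at_top_iff[OF nontrivial at_top])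
    show "eventually (\<lambda>x. (p * x < q * m) = (p = 0)) at_top"
      using eventually_ge_at_top[of "q * m"]
    proof eventually_elim
      case (elim x)
      show ?case
      proof (cases "p = 0")
        case False
        then have "x \<le> p * x" by simp
        with elim False show ?thesis by linarith
      qed (use that m_pos in simp)
    qed
  qed
  have "ratio U a b = Sup {real p / real q | p q :: nat. q \<noteq> 0 \<and> p = 0}"
    unfolding ratio_eq_Sup_t by (rule arg_cong[where f = Sup]) (use ev_iff in blast)
  also have "{real p / real q | p q :: nat. q \<noteq> 0 \<and> p = 0} = {0}" by force
  finally show ?thesis by simp
qed

lemma ratio_cases: "ratio U a b = 0 \<or> (\<exists>k::nat. 0 < k \<and> ratio U a b = real m / real k)"
  using ultrafilter_eventually_const_or_at_top[OF ultrafilter, of t]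
    t_const_pos ratio_if_t_const ratio_if_t_at_top by blast

lemma eventually_mult_a_less_mult_b_iff:
  "eventually (\<lambda>i. p * a i < q * b i) U \<longleftrightarrow> eventually (\<lambda>i. m * p \<le> q * t i \<and> 0 < q) U"
  using mb_eq a_large[of "q * n"]
  by (intro eventually_subst, eventually_elim) (simp add: m_pos n_pos mult_a_less_mult_b_iff)

lemma eventually_mult_b_less_alpha_b_iff:
  "eventually (\<lambda>i. p * b i < q * alpha_b (a i) (b i) + q * a i) U \<longleftrightarrow>
   eventually (\<lambda>i. p * t i < m * q * (t i div m + 1)) U"
  using mb_eq a_large[of n] a_large[of "p * n"]
  by (intro eventually_subst, eventually_elim) (simp add: alpha_b_def m_pos mult_b_less_alpha_b_iff)

lemma eventually_mult_beta1_less_iff: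
  "eventually (\<lambda>i. p * beta (a i) (b i) 1 < q * (a i * b i)) U \<longleftrightarrow>
   eventually (\<lambda>i. p * c i < n * q) U"
  unfolding k1(3) using nk1_eq a_large[of "p * m"]
  by (intro eventually_subst, eventually_elim) (simp add: n_pos b_pos mult_beta_less_mult_ab_iff)

end

section \<open>Two limit 2-semigroups with the same basic invariants\<close>

locale two_limit2_beta =
  L1: limit2_beta m n U1 a1 b1 + L2: limit2_beta m n U2 a2 b2
  for m n U1 a1 b1 U2 a2 b2 +
  assumes same_ures_a: "\<forall>N\<ge>1. ures U1 a1 N = ures U2 a2 N"
    and same_ratio: "ratio U1 a1 b1 = ratio U2 a2 b2"
    and same_Ma_res_alpha_b_if_ratio_zero: "ratio U1 a1 b1 = 0 \<longrightarrow>
      (\<forall>N\<ge>1. Ma_res U1 a1 (\<lambda>i. alpha_b (a1 i) (b1 i)) N = Ma_res U2 a2 (\<lambda>i. alpha_b (a2 i) (b2 i)) N)"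
begin

lemma same_residues_a: "same_residues U1 a1 U2 a2"
  using same_ures_a same_residues_iff_ures[OF L1.ultrafilter L2.ultrafilter] by simp

lemma same_t_limit:
  "(\<exists>j. eventually (\<lambda>i. L1.t i = j) U1 \<and> eventually (\<lambda>i. L2.t i = j) U2) \<or>
   (filterlim L1.t at_top U1 \<and> filterlim L2.t at_top U2)"
proof -
  have m_div_pos: "real m / real j \<noteq> 0" if "0 < j" for j :: nat
    using that L1.m_pos by simp
  have m_div_inj: "j1 = j2" if "real m / real j1 = real m / real j2" "0 < j1" "0 < j2" for j1 j2 :: nat
    using that L1.m_pos by (simp add: frac_eq_eq)
  from ultrafilter_eventually_const_or_at_top[OF L1.ultrafilter, of L1.t]
    ultrafilter_eventually_const_or_at_top[OF L2.ultrafilter, of L2.t]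
  show ?thesis
    using L1.ratio_if_t_const L2.ratio_if_t_const L1.ratio_if_t_at_top L2.ratio_if_t_at_top
      L1.t_const_pos L2.t_const_pos same_ratio m_div_pos m_div_inj
    by metis
qed

lemma same_eventually_t:
  assumes "eventually (\<lambda>x. P x = B) at_top"
  shows "eventually (\<lambda>i. P (L1.t i)) U1 \<longleftrightarrow> eventually (\<lambda>i. P (L2.t i)) U2"
  using same_t_limit
proof (elim disjE exE conjE)
  fix j assume "eventually (\<lambda>i. L1.t i = j) U1" "eventually (\<lambda>i. L2.t i = j) U2"
  then show ?thesis
    by (simp add: eventually_comp_const_iff[OF L1.nontrivial] eventually_comp_const_iff[OF L2.nontrivial])
next
  assume "filterlim L1.t at_top U1" "filterlim L2.t at_top U2"
  then show ?thesis
    by (simp add: eventually_comp_at_top_iff[OF L1.nontrivial _ assms]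
        eventually_comp_at_top_iff[OF L2.nontrivial _ assms])
qed

lemma same_c_limit: "\<exists>j. eventually (\<lambda>i. L1.c i = j) U1 \<and> eventually (\<lambda>i. L2.c i = j) U2"
  by (rule same_residues_unique_solution[OF L1.ultrafilter L2.ultrafilter same_residues_a
        L1.coprime_a_n L1.c_solves L2.c_solves])

lemma same_residues_c: "same_residues U1 L1.c U2 L2.c"
  using same_c_limit same_residues_const by blast

lemma same_residues_t: "same_residues U1 L1.t U2 L2.t"
  using same_t_limit
proof
  assume "\<exists>j. eventually (\<lambda>i. L1.t i = j) U1 \<and> eventually (\<lambda>i. L2.t i = j) U2"
  then show ?thesis using same_residues_const by blast
next
  assume "filterlim L1.t at_top U1 \<and> filterlim L2.t at_top U2"
  then have "ratio U1 a1 b1 = 0" using L1.ratio_if_t_at_top by blast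
  then have "same_residues U1 (\<lambda>i. alpha_b (a1 i) (b1 i) div a1 i) U2 (\<lambda>i. alpha_b (a2 i) (b2 i) div a2 i)"
    using same_Ma_res_alpha_b_if_ratio_zero same_residues_iff_ures[OF L1.ultrafilter L2.ultrafilter]
    unfolding Ma_res_def by simp
  then have div_m: "same_residues U1 (\<lambda>i. L1.t i div m) U2 (\<lambda>i. L2.t i div m)"
    by (rule same_residues_cong[OF _ L1.div_m_t_eq L2.div_m_t_eq])
  \<comment> \<open>\<open>t mod m\<close> is pinned down by \<open>t a + n \<equiv> 0 (mod m)\<close>, as \<open>a\<close> is a unit modulo \<open>m\<close>\<close>
  obtain s where "eventually (\<lambda>i. L1.t i mod m = s) U1" "eventually (\<lambda>i. L2.t i mod m = s) U2"
    using same_residues_unique_solution[OF L1.ultrafilter L2.ultrafilter same_residues_a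
        L1.coprime_a_m L1.t_mod_solves L2.t_mod_solves] by blast
  then have mod_m: "same_residues U1 (\<lambda>i. L1.t i mod m) U2 (\<lambda>i. L2.t i mod m)"
    by (rule same_residues_const)
  have "same_residues U1 (\<lambda>i. m * (L1.t i div m) + L1.t i mod m) U2 (\<lambda>i. m * (L2.t i div m) + L2.t i mod m)"
    by (intro same_residues_add same_residues_mult same_residues_constant div_m mod_m)
  then show ?thesis by (rule same_residues_cong) simp_all
qed

lemma same_ures_b: "\<forall>N\<ge>1. ures U1 b1 N = ures U2 b2 N"
proof -
  have "same_residues U1 (\<lambda>i. L1.t i * a1 i + n) U2 (\<lambda>i. L2.t i * a2 i + n)"
    by (intro same_residues_add same_residues_mult same_residues_t same_residues_a same_residues_constant)
  then have "same_residues U1 b1 U2 b2"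
    by (rule same_residues_div_exact[OF _ L1.m_pos L1.mb_eq L2.mb_eq])
  then show ?thesis using same_residues_iff_ures[OF L1.ultrafilter L2.ultrafilter] by simp
qed

lemma same_Mb_res_beta1:
  "\<forall>N\<ge>1. Mb_res U1 b1 (\<lambda>i. beta (a1 i) (b1 i) 1) N = Mb_res U2 b2 (\<lambda>i. beta (a2 i) (b2 i) 1) N"
proof -
  have "same_residues U1 (\<lambda>i. m + L1.c i * a1 i) U2 (\<lambda>i. m + L2.c i * a2 i)"
    by (intro same_residues_add same_residues_mult same_residues_c same_residues_a same_residues_constant)
  then have "same_residues U1 L1.k1 U2 L2.k1"
    by (rule same_residues_div_exact[OF _ L1.n_pos L1.nk1_eq L2.nk1_eq])
  then show ?thesis
    using same_residues_iff_ures[OF L1.ultrafilter L2.ultrafilter]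
    unfolding Mb_res_def L1.k1_def[abs_def] L2.k1_def[abs_def] by simp
qed

lemma same_Ma_res_alpha1:
  "\<forall>N\<ge>1. Ma_res U1 a1 (\<lambda>i. alpha (a1 i) (b1 i) 1) N = Ma_res U2 a2 (\<lambda>i. alpha (a2 i) (b2 i) 1) N"
proof -
  have "same_residues U1 (\<lambda>i. m * L1.t i + L1.c i * n + L1.c i * L1.t i * a1 i)
      U2 (\<lambda>i. m * L2.t i + L2.c i * n + L2.c i * L2.t i * a2 i)"
    by (intro same_residues_add same_residues_mult same_residues_c same_residues_t same_residues_a
        same_residues_constant)
  then have "same_residues U1 (\<lambda>i. alpha (a1 i) (b1 i) 1 div a1 i) U2 (\<lambda>i. alpha (a2 i) (b2 i) 1 div a2 i)"
    using L1.m_pos L1.n_pos by (intro same_residues_div_exact[OF _ _ L1.alpha1_eq L2.alpha1_eq]) simp_all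
  then show ?thesis
    using same_residues_iff_ures[OF L1.ultrafilter L2.ultrafilter] unfolding Ma_res_def by simp
qed

lemma same_Ma_res_alpha_b:
  "\<forall>N\<ge>1. Ma_res U1 a1 (\<lambda>i. alpha_b (a1 i) (b1 i)) N = Ma_res U2 a2 (\<lambda>i. alpha_b (a2 i) (b2 i)) N"
proof -
  have "same_residues U1 (\<lambda>i. L1.t i div m) U2 (\<lambda>i. L2.t i div m)"
    using same_residues_div[OF same_residues_t L1.m_pos] .
  then have "same_residues U1 (\<lambda>i. alpha_b (a1 i) (b1 i) div a1 i) U2 (\<lambda>i. alpha_b (a2 i) (b2 i) div a2 i)"
    by (rule same_residues_cong)
      (use L1.div_m_t_eq L2.div_m_t_eq in \<open>auto elim: eventually_mono\<close>)
  then show ?thesis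
    using same_residues_iff_ures[OF L1.ultrafilter L2.ultrafilter] unfolding Ma_res_def by simp
qed

lemma same_comparisons:
  "(eventually (\<lambda>i. p * a1 i < q * b1 i) U1 \<longleftrightarrow> eventually (\<lambda>i. p * a2 i < q * b2 i) U2) \<and>
   (eventually (\<lambda>i. p * b1 i < q * alpha_b (a1 i) (b1 i) + q * a1 i) U1 \<longleftrightarrow>
    eventually (\<lambda>i. p * b2 i < q * alpha_b (a2 i) (b2 i) + q * a2 i) U2) \<and>
   (eventually (\<lambda>i. p * beta (a1 i) (b1 i) 1 < q * (a1 i * b1 i)) U1 \<longleftrightarrow>
    eventually (\<lambda>i. p * beta (a2 i) (b2 i) 1 < q * (a2 i * b2 i)) U2)"
proof (intro conjI)
  have "eventually (\<lambda>x. (m * p \<le> q * x \<and> 0 < q) = (0 < q)) at_top"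
    using eventually_ge_at_top[of "m * p"]
    by eventually_elim (auto intro: order.trans[OF _ mult_le_mono1[of 1 q]])
  then show "eventually (\<lambda>i. p * a1 i < q * b1 i) U1 \<longleftrightarrow> eventually (\<lambda>i. p * a2 i < q * b2 i) U2"
    unfolding L1.eventually_mult_a_less_mult_b_iff L2.eventually_mult_a_less_mult_b_iff
    by (rule same_eventually_t)
next
  have "eventually (\<lambda>x. (p * x < m * q * (x div m + 1)) = (p \<le> q \<and> 0 < q)) at_top"
    using eventually_gt_at_top[of "q * m"]
    by eventually_elim (rule mult_less_mult_div_add_one_iff[OF L1.m_pos])
  then show "eventually (\<lambda>i. p * b1 i < q * alpha_b (a1 i) (b1 i) + q * a1 i) U1 \<longleftrightarrow>
      eventually (\<lambda>i. p * b2 i < q * alpha_b (a2 i) (b2 i) + q * a2 i) U2"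
    unfolding L1.eventually_mult_b_less_alpha_b_iff L2.eventually_mult_b_less_alpha_b_iff
    by (rule same_eventually_t)
next
  obtain j where j: "eventually (\<lambda>i. L1.c i = j) U1" "eventually (\<lambda>i. L2.c i = j) U2"
    using same_c_limit by blast
  show "eventually (\<lambda>i. p * beta (a1 i) (b1 i) 1 < q * (a1 i * b1 i)) U1 \<longleftrightarrow>
      eventually (\<lambda>i. p * beta (a2 i) (b2 i) 1 < q * (a2 i * b2 i)) U2"
    unfolding L1.eventually_mult_beta1_less_iff L2.eventually_mult_beta1_less_iff
    using eventually_comp_const_iff[OF L1.nontrivial j(1), of "\<lambda>x. p * x < n * q"]
      eventually_comp_const_iff[OF L2.nontrivial j(2), of "\<lambda>x. p * x < n * q"]
    by simp
qed

end

theorem proposition5p3: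
  fixes m n :: nat
    and U1 U2 :: "nat filter"
    and a1 b1 a2 b2 :: "nat \<Rightarrow> nat"
  assumes "1 \<le> m" and "1 \<le> n"
    and "limit2 U1 a1 b1" and "limit2 U2 a2 b2"
    and "eventually (\<lambda>i. m * b1 i = beta (a1 i) (b1 i) n) U1"
    and "eventually (\<lambda>i. m * b2 i = beta (a2 i) (b2 i) n) U2"
    and "coprime (ures U1 a1 m) m" and "coprime (ures U2 a2 m) m"
    and "\<forall>N\<ge>1. ures U1 a1 N = ures U2 a2 N"
    and "ratio U1 a1 b1 = ratio U2 a2 b2"
    and "ratio U1 a1 b1 = 0 \<longrightarrow>
         (\<forall>N\<ge>1. Ma_res U1 a1 (\<lambda>i. alpha_b (a1 i) (b1 i)) N =
                 Ma_res U2 a2 (\<lambda>i. alpha_b (a2 i) (b2 i)) N)"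
  shows
    "((\<forall>N\<ge>1. ures U1 b1 N = ures U2 b2 N) \<and>
      (\<forall>N\<ge>1. Mb_res U1 b1 (\<lambda>i. beta (a1 i) (b1 i) 1) N =
              Mb_res U2 b2 (\<lambda>i. beta (a2 i) (b2 i) 1) N) \<and>
      (\<forall>N\<ge>1. Ma_res U1 a1 (\<lambda>i. alpha (a1 i) (b1 i) 1) N =
              Ma_res U2 a2 (\<lambda>i. alpha (a2 i) (b2 i) 1) N) \<and>
      (\<forall>N\<ge>1. Ma_res U1 a1 (\<lambda>i. alpha_b (a1 i) (b1 i)) N =
              Ma_res U2 a2 (\<lambda>i. alpha_b (a2 i) (b2 i)) N) \<and>
      (\<forall>p q :: nat.
         (eventually (\<lambda>i. p * a1 i < q * b1 i) U1 \<longleftrightarrow>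
          eventually (\<lambda>i. p * a2 i < q * b2 i) U2) \<and>
         (eventually (\<lambda>i. p * b1 i < q * alpha_b (a1 i) (b1 i) + q * a1 i) U1 \<longleftrightarrow>
          eventually (\<lambda>i. p * b2 i < q * alpha_b (a2 i) (b2 i) + q * a2 i) U2) \<and>
         (eventually (\<lambda>i. p * beta (a1 i) (b1 i) 1 < q * (a1 i * b1 i)) U1 \<longleftrightarrow>
          eventually (\<lambda>i. p * beta (a2 i) (b2 i) 1 < q * (a2 i * b2 i)) U2)))
     \<and>
     (\<forall>(U :: nat filter) (a :: nat \<Rightarrow> nat) b.
        limit2 U a b \<and> eventually (\<lambda>i. m * b i = beta (a i) (b i) n) U \<and>
        coprime (ures U a m) m \<longrightarrow>
        ratio U a b = 0 \<or> (\<exists>k::nat. 0 < k \<and> ratio U a b = real m / real k))"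
proof -
  interpret two_limit2_beta m n U1 a1 b1 U2 a2 b2
    using assms by (simp add: two_limit2_beta_def two_limit2_beta_axioms_def limit2_beta_def)
  have ratio_shape: "\<forall>(U :: nat filter) (a :: nat \<Rightarrow> nat) b.
      limit2 U a b \<and> eventually (\<lambda>i. m * b i = beta (a i) (b i) n) U \<and>
      coprime (ures U a m) m \<longrightarrow>
      ratio U a b = 0 \<or> (\<exists>k::nat. 0 < k \<and> ratio U a b = real m / real k)"
    by (intro allI impI limit2_beta.ratio_cases[of m n]) (use assms(1,2) in \<open>auto simp: limit2_beta_def\<close>)
  show ?thesis
    using same_ures_b same_Mb_res_beta1 same_Ma_res_alpha1 same_Ma_res_alpha_b same_comparisons
      ratio_shape by blast
qed

end
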